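(* Let $\sigma$ be an ergodic measure-preserving transformation of $(\Omega,\mathbb P)$ and $A\colon\Omega\to M_{d\times d}(\mathbb R)$ measurable with $\log^+\|A(\omega)\|$ integrable. There exists $C>0$ such that for all $\eta_0>0$ there exists $\epsilon_0>0$ such that for all $0<\epsilon<\epsilon_0$ there is a measurable $G\subseteq\Omega$ with $\mathbb P(G)\ge1-\eta_0$ such that for all $\omega\in G$ and all sequences $(\Delta_n)\in U^{\mathbb Z}$, $$\big\|(A(\sigma^{N-1}\omega)+\epsilon\Delta_{N-1})\cdots(A(\omega)+\epsilon\Delta_0)-A(\sigma^{N-1}\omega)\cdots A(\omega)\big\|\le1,$$ where $N=\lfloor C|\log\epsilon|\rfloor$.
   Context: Norms are operator norms; $U=\{M\in M_{d\times d}(\mathbb R):\|M\|\le1\}$. *)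

theory Defs
  imports "HOL-Probability.Probability"
begin

definition measure_preserving_map :: "'a measure \<Rightarrow> ('a \<Rightarrow> 'a) \<Rightarrow> bool" where
  "measure_preserving_map M T \<longleftrightarrow> T \<in> M \<rightarrow>\<^sub>M M \<and>
     (\<forall>B\<in>sets M. emeasure M (T -` B \<inter> space M) = emeasure M B)"

definition ergodic_map :: "'a measure \<Rightarrow> ('a \<Rightarrow> 'a) \<Rightarrow> bool" where
  "ergodic_map M T \<longleftrightarrow> measure_preserving_map M T \<and>
     (\<forall>B\<in>sets M. T -` B \<inter> space M = B \<longrightarrow> measure M B = 0 \<or> measure M B = 1)"

definition mat_opnorm :: "real^'d^'d \<Rightarrow> real" where
  "mat_opnorm X = onorm (\<lambda>x. X *v x)"

fun mat_prod :: "(nat \<Rightarrow> real^'d^'d) \<Rightarrow> nat \<Rightarrow> real^'d^'d" where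
  "mat_prod B 0 = mat 1"
| "mat_prod B (Suc n) = B n ** mat_prod B n"

end

theory Submission
  imports Defs "HOL-Real_Asymp.Real_Asymp"
begin

(* Write S_n f = f + f o sigma + ... + f o sigma^(n-1) for Birkhoff sums and
   f = log+ |A|.  The proof has a deterministic and a probabilistic half.

   Deterministic: for matrices A_k with |A_k| <= b_k, b_k >= 1, and |D_k| <= 1,
     |prod (A_k + e D_k) - prod A_k| <= (prod b_k) ((1+e)^n - 1);
   along an orbit with b_k = exp (f (sigma^k w)) the right-hand side is
   exp (S_n f w) ((1+e)^n - 1).

   Probabilistic: a maximal ergodic inequality shows that the Birkhoff sums of
   f - c are bounded above almost surely whenever c > E f (the set where they
   are unbounded is invariant, so by ergodicity it is null or conull, and the
   maximal inequality rules out conull).  Hence for every eta there is N0 with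
   S_n f <= n (E f + 1) for all n >= N0 on a set of probability >= 1 - eta.

   With L = E f + 1, C = 1/(2L) and N = floor (C |ln e|) the product of the
   two bounds is at most exp (-ln e / 2) (exp (-C e ln e) - 1), which tends
   to 0 as e -> 0; this yields the theorem. *)

section \<open>The operator norm of square matrices\<close>

lemma mat_opnorm_nonneg: "mat_opnorm X \<ge> 0"
  unfolding mat_opnorm_def by (rule onorm_pos_le) simp

lemma mat_opnorm_mult: "mat_opnorm (X ** Y) \<le> mat_opnorm X * mat_opnorm Y"
proof -
  have "(\<lambda>x. (X ** Y) *v x) = (\<lambda>x. X *v x) \<circ> (\<lambda>x. Y *v x)"
    by (auto simp: matrix_vector_mul_assoc)
  then show ?thesis unfolding mat_opnorm_def by (simp add: onorm_compose)
qed

lemma mat_opnorm_add: "mat_opnorm (X + Y) \<le> mat_opnorm X + mat_opnorm Y"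
  unfolding mat_opnorm_def matrix_vector_mult_add_rdistrib by (rule onorm_triangle) simp_all

lemma mat_opnorm_scaleR: "mat_opnorm (r *\<^sub>R X) = \<bar>r\<bar> * mat_opnorm X"
proof -
  have "(\<lambda>x. (r *\<^sub>R X) *v x) = (\<lambda>x. r *\<^sub>R (X *v x))"
    by (simp add: scaleR_matrix_vector_assoc)
  then show ?thesis unfolding mat_opnorm_def by (simp add: onorm_scaleR)
qed

lemma mat_opnorm_id: "mat_opnorm (mat 1 :: real^'d^'d) \<le> 1"
proof -
  have "mat_opnorm (mat 1 :: real^'d^'d) = onorm (\<lambda>x::real^'d. x)"
    unfolding mat_opnorm_def by (rule arg_cong[where f=onorm]) (rule ext, simp)
  then show ?thesis using onorm_id_le by simp
qed

lemma mat_opnorm_zero: "mat_opnorm (0 :: real^'d^'d) = 0"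
proof -
  have "mat_opnorm (0 :: real^'d^'d) = onorm (\<lambda>x::real^'d. 0::real^'d)"
    unfolding mat_opnorm_def by (rule arg_cong[where f=onorm]) (rule ext, simp)
  then show ?thesis using onorm_zero by simp
qed

lemma mat_opnorm_le_exp_log_plus: "mat_opnorm X \<le> exp (max 0 (ln (mat_opnorm X)))"
proof (cases "mat_opnorm X > 0")
  case True
  then have "mat_opnorm X = exp (ln (mat_opnorm X))" by simp
  also have "\<dots> \<le> exp (max 0 (ln (mat_opnorm X)))" by simp
  finally show ?thesis .
next
  case False
  then show ?thesis using mat_opnorm_nonneg[of X] by simp
qed

lemma matrix_diff_ldistrib: "(X::real^'d^'d) ** (P - Q) = X ** P - X ** Q"
  by (metis add_diff_cancel diff_add_cancel matrix_add_ldistrib)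

lemma matrix_add_rdistrib: "((X::real^'d^'d) + Y) ** P = X ** P + Y ** P"
  by (vector matrix_matrix_mult_def sum.distrib[symmetric] field_simps)

section \<open>Perturbation of matrix products\<close>

lemma mat_prod_norm_le:
  assumes "\<And>k. mat_opnorm (B k) \<le> b k"
  shows "mat_opnorm (mat_prod B n) \<le> (\<Prod>k<n. b k)"
proof (induction n)
  case 0
  then show ?case by (simp add: mat_opnorm_id)
next
  case (Suc n)
  have "mat_opnorm (mat_prod B (Suc n)) \<le> mat_opnorm (B n) * mat_opnorm (mat_prod B n)"
    by (simp add: mat_opnorm_mult)
  also have "\<dots> \<le> b n * (\<Prod>k<n. b k)"
    using Suc assms[of n] by (intro mult_mono) (auto intro: mat_opnorm_nonneg order.trans)
  finally show ?case by (simp add: mult.commute)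
qed

text \<open>Perturbing each factor by at most \<open>e\<close> moves the product by at most
  \<open>\<Prod>(b\<^sub>k + e) - \<Prod>b\<^sub>k\<close>: the difference telescopes as
  \<open>(A\<^sub>n + e D\<^sub>n)(P - Q) + e D\<^sub>n Q\<close>.\<close>
lemma mat_prod_perturb:
  fixes A D :: "nat \<Rightarrow> real^'d^'d" and e :: real
  assumes e: "e \<ge> 0" and A: "\<And>k. mat_opnorm (A k) \<le> b k"
    and D: "\<And>k. mat_opnorm (D k) \<le> 1"
  shows "mat_opnorm (mat_prod (\<lambda>k. A k + e *\<^sub>R D k) n - mat_prod A n)
           \<le> (\<Prod>k<n. b k + e) - (\<Prod>k<n. b k)"
proof (induction n)
  case 0
  then show ?case by (simp add: mat_opnorm_zero)
next
  case (Suc n)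
  define P where "P = mat_prod (\<lambda>k. A k + e *\<^sub>R D k) n"
  define Q where "Q = mat_prod A n"
  have b0: "b n \<ge> 0" using A[of n] mat_opnorm_nonneg order.trans by blast
  have Q: "mat_opnorm Q \<le> (\<Prod>k<n. b k)" unfolding Q_def using A by (rule mat_prod_norm_le)
  have PQ: "mat_opnorm (P - Q) \<le> (\<Prod>k<n. b k + e) - (\<Prod>k<n. b k)"
    using Suc by (simp add: P_def Q_def)
  have pert: "mat_opnorm (A n + e *\<^sub>R D n) \<le> b n + e"
    using mat_opnorm_add[of "A n" "e *\<^sub>R D n"] A[of n] D[of n] e
    by (simp add: mat_opnorm_scaleR) (smt (verit) mult_left_le)
  have "mat_prod (\<lambda>k. A k + e *\<^sub>R D k) (Suc n) - mat_prod A (Suc n)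
        = (A n + e *\<^sub>R D n) ** (P - Q) + (e *\<^sub>R D n) ** Q"
    by (simp add: P_def Q_def matrix_diff_ldistrib matrix_add_rdistrib)
  then have "mat_opnorm (mat_prod (\<lambda>k. A k + e *\<^sub>R D k) (Suc n) - mat_prod A (Suc n))
      \<le> mat_opnorm (A n + e *\<^sub>R D n) * mat_opnorm (P - Q) + e * (mat_opnorm (D n) * mat_opnorm Q)"
    using mat_opnorm_add mat_opnorm_mult[of "A n + e *\<^sub>R D n" "P - Q"]
      mat_opnorm_mult[of "e *\<^sub>R D n" Q] e
    by (smt (verit) mat_opnorm_scaleR mult.assoc)
  also have "\<dots> \<le> (b n + e) * ((\<Prod>k<n. b k + e) - (\<Prod>k<n. b k)) + e * (1 * (\<Prod>k<n. b k))"
    using pert PQ D[of n] Q e b0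
    by (intro add_mono mult_mono mult_left_mono) (auto simp: mat_opnorm_nonneg intro: order.trans)
  also have "\<dots> = (\<Prod>k<Suc n. b k + e) - (\<Prod>k<Suc n. b k)"
    by (simp add: algebra_simps)
  finally show ?case .
qed

lemma mat_prod_perturb_relative:
  fixes A D :: "nat \<Rightarrow> real^'d^'d" and e :: real
  assumes e: "e \<ge> 0" and A_le: "\<And>k. mat_opnorm (A k) \<le> b k" and b1: "\<And>k. b k \<ge> 1"
    and D_le: "\<And>k. mat_opnorm (D k) \<le> 1"
  shows "mat_opnorm (mat_prod (\<lambda>k. A k + e *\<^sub>R D k) n - mat_prod A n)
           \<le> (\<Prod>k<n. b k) * ((1 + e) ^ n - 1)"
proof -
  have "mat_opnorm (mat_prod (\<lambda>k. A k + e *\<^sub>R D k) n - mat_prod A n)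
          \<le> (\<Prod>k<n. b k + e) - (\<Prod>k<n. b k)"
    by (rule mat_prod_perturb[OF e A_le D_le])
  moreover have "0 \<le> b k + e \<and> b k + e \<le> b k * (1 + e)" for k
  proof -
    have "e * 1 \<le> e * b k" using e b1[of k] by (intro mult_left_mono) auto
    then show ?thesis using e b1[of k] by (simp add: algebra_simps)
  qed
  then have "(\<Prod>k<n. b k + e) \<le> (\<Prod>k<n. b k * (1 + e))"
    by (intro prod_mono) auto
  then have "(\<Prod>k<n. b k + e) \<le> (\<Prod>k<n. b k) * (1 + e) ^ n"
    by (simp add: prod.distrib)
  ultimately show ?thesis by (simp add: algebra_simps)
qed

lemma measure_preserving_distr:
  assumes "measure_preserving_map M \<sigma>"
  shows "distr M M \<sigma> = M"
proof (rule measure_eqI)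
  have m: "\<sigma> \<in> M \<rightarrow>\<^sub>M M" using assms unfolding measure_preserving_map_def by auto
  show "sets (distr M M \<sigma>) = sets M" by simp
  fix B assume "B \<in> sets (distr M M \<sigma>)"
  then show "emeasure (distr M M \<sigma>) B = emeasure M B"
    using assms m unfolding measure_preserving_map_def by (simp add: emeasure_distr)
qed

lemma measure_preserving_integral:
  fixes h :: "'a \<Rightarrow> real"
  assumes mp: "measure_preserving_map M \<sigma>" and h: "integrable M h"
  shows "integrable M (\<lambda>x. h (\<sigma> x))" "integral\<^sup>L M (\<lambda>x. h (\<sigma> x)) = integral\<^sup>L M h"
proof -
  have m: "\<sigma> \<in> M \<rightarrow>\<^sub>M M" using mp unfolding measure_preserving_map_def by auto
  have hm: "h \<in> borel_measurable M" using h by auto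
  have "integrable (distr M M \<sigma>) h" using measure_preserving_distr[OF mp] h by simp
  then show "integrable M (\<lambda>x. h (\<sigma> x))" using integrable_distr_eq[OF m hm] by simp
  show "integral\<^sup>L M (\<lambda>x. h (\<sigma> x)) = integral\<^sup>L M h"
    using integral_distr[OF m hm] measure_preserving_distr[OF mp] by simp
qed

section \<open>Birkhoff sums and the maximal ergodic inequality\<close>

definition birkhoff_sum :: "('a \<Rightarrow> 'a) \<Rightarrow> ('a \<Rightarrow> real) \<Rightarrow> nat \<Rightarrow> 'a \<Rightarrow> real" where
  "birkhoff_sum \<sigma> g n \<omega> = (\<Sum>k<n. g ((\<sigma> ^^ k) \<omega>))"

lemma birkhoff_sum_0 [simp]: "birkhoff_sum \<sigma> g 0 \<omega> = 0"
  by (simp add: birkhoff_sum_def)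

lemma birkhoff_sum_Suc: "birkhoff_sum \<sigma> g (Suc n) \<omega> = g \<omega> + birkhoff_sum \<sigma> g n (\<sigma> \<omega>)"
  unfolding birkhoff_sum_def by (simp del: sum.lessThan_Suc add: sum.lessThan_Suc_shift funpow_swap1)

lemma birkhoff_sum_diff_const:
  "birkhoff_sum \<sigma> (\<lambda>\<omega>. f \<omega> - c) n \<omega> = birkhoff_sum \<sigma> f n \<omega> - real n * c"
  unfolding birkhoff_sum_def by (simp add: sum_subtractf)

lemma birkhoff_sum_measurable:
  assumes "\<sigma> \<in> M \<rightarrow>\<^sub>M M" "g \<in> borel_measurable M"
  shows "birkhoff_sum \<sigma> g n \<in> borel_measurable M"
proof (induction n)
  case (Suc n)
  have "birkhoff_sum \<sigma> g (Suc n) = (\<lambda>\<omega>. g \<omega> + birkhoff_sum \<sigma> g n (\<sigma> \<omega>))"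
    by (simp add: fun_eq_iff birkhoff_sum_Suc)
  then show ?case using assms measurable_compose[OF assms(1) Suc] by simp
qed simp

lemma birkhoff_sum_integrable:
  assumes "measure_preserving_map M \<sigma>" "integrable M g"
  shows "integrable M (birkhoff_sum \<sigma> g n)"
proof (induction n)
  case (Suc n)
  have "birkhoff_sum \<sigma> g (Suc n) = (\<lambda>\<omega>. g \<omega> + birkhoff_sum \<sigma> g n (\<sigma> \<omega>))"
    by (simp add: fun_eq_iff birkhoff_sum_Suc)
  then show ?case using assms measure_preserving_integral(1)[OF assms(1) Suc] by simp
qed simp

text \<open>Running maximum \<open>max\<^sub>k\<^sub>\<le>\<^sub>N S\<^sub>k g\<close> of the Birkhoff sums (it includes
  \<open>S\<^sub>0 g = 0\<close>, so it is nonnegative).\<close>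
fun running_max :: "('a \<Rightarrow> 'a) \<Rightarrow> ('a \<Rightarrow> real) \<Rightarrow> nat \<Rightarrow> 'a \<Rightarrow> real" where
  "running_max \<sigma> g 0 \<omega> = 0"
| "running_max \<sigma> g (Suc N) \<omega> = max (running_max \<sigma> g N \<omega>) (birkhoff_sum \<sigma> g (Suc N) \<omega>)"

lemma running_max_nonneg: "running_max \<sigma> g N \<omega> \<ge> 0"
  by (induction N) auto

lemma running_max_ge: "k \<le> N \<Longrightarrow> birkhoff_sum \<sigma> g k \<omega> \<le> running_max \<sigma> g N \<omega>"
proof (induction N)
  case (Suc N)
  then show ?case by (cases "k = Suc N") auto
qed simp

lemma running_max_attained:
  "running_max \<sigma> g N \<omega> > 0 \<Longrightarrow>
     \<exists>k. 1 \<le> k \<and> k \<le> N \<and> running_max \<sigma> g N \<omega> = birkhoff_sum \<sigma> g k \<omega>"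
proof (induction N)
  case (Suc N)
  then show ?case
    by (cases "birkhoff_sum \<sigma> g (Suc N) \<omega> \<ge> running_max \<sigma> g N \<omega>") (auto intro: le_SucI)
qed simp

lemma running_max_nonpos_iff:
  "running_max \<sigma> g N \<omega> \<le> 0 \<longleftrightarrow> (\<forall>k\<le>N. birkhoff_sum \<sigma> g k \<omega> \<le> 0)"
  using running_max_ge[of _ N \<sigma> g \<omega>] running_max_attained[of \<sigma> g N \<omega>] by force

lemma running_max_measurable:
  assumes "\<sigma> \<in> M \<rightarrow>\<^sub>M M" "g \<in> borel_measurable M"
  shows "running_max \<sigma> g N \<in> borel_measurable M"
  by (induction N) (auto intro!: borel_measurable_max birkhoff_sum_measurable[OF assms])

lemma running_max_integrable:
  assumes "measure_preserving_map M \<sigma>" "integrable M g"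
  shows "integrable M (running_max \<sigma> g N)"
  by (induction N) (simp_all add: birkhoff_sum_integrable[OF assms])

text \<open>Pointwise form of the maximal inequality (Garsia's trick): where the
  running maximum of the sums of \<open>f - c\<close> is positive it is attained at some
  \<open>k \<ge> 1\<close>, and \<open>S\<^sub>k = (f - c) + S\<^sub>k\<^sub>-\<^sub>1 \<circ> \<sigma>\<close>.\<close>
lemma running_max_step:
  fixes \<sigma> :: "'a \<Rightarrow> 'a" and N :: nat
  assumes c: "c \<ge> 0" and f: "f \<omega> \<ge> 0"
  defines "m \<equiv> running_max \<sigma> (\<lambda>\<omega>. f \<omega> - c) N"
  shows "m \<omega> - m (\<sigma> \<omega>) \<le> f \<omega> - c + c * (if m \<omega> \<le> 0 then 1 else 0)"
proof (cases "m \<omega> \<le> 0")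
  case True
  then show ?thesis using running_max_nonneg[of \<sigma> "\<lambda>\<omega>. f \<omega> - c" N "\<sigma> \<omega>"] f unfolding m_def by simp
next
  case False
  then obtain j where j: "Suc j \<le> N" "m \<omega> = birkhoff_sum \<sigma> (\<lambda>\<omega>. f \<omega> - c) (Suc j) \<omega>"
    using running_max_attained[of \<sigma> _ N \<omega>] unfolding m_def
    by (metis Suc_pred less_le_trans not_le zero_less_one)
  have "birkhoff_sum \<sigma> (\<lambda>\<omega>. f \<omega> - c) j (\<sigma> \<omega>) \<le> m (\<sigma> \<omega>)"
    using j unfolding m_def by (intro running_max_ge) auto
  then show ?thesis using j False by (simp add: birkhoff_sum_Suc)
qed

lemma maximal_ergodic_inequality:
  assumes P: "prob_space M" and mp: "measure_preserving_map M \<sigma>" and fi: "integrable M f"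
    and f0: "\<And>\<omega>. f \<omega> \<ge> 0" and c: "c \<ge> 0"
  shows "0 \<le> integral\<^sup>L M f - c + c * measure M {\<omega>\<in>space M. running_max \<sigma> (\<lambda>\<omega>. f \<omega> - c) N \<omega> \<le> 0}"
proof -
  interpret prob_space M by (rule P)
  define m where "m = running_max \<sigma> (\<lambda>\<omega>. f \<omega> - c) N"
  have sm: "\<sigma> \<in> M \<rightarrow>\<^sub>M M" using mp unfolding measure_preserving_map_def by auto
  have [measurable]: "m \<in> borel_measurable M"
    unfolding m_def using fi by (intro running_max_measurable[OF sm]) auto
  define F where "F = {\<omega>\<in>space M. m \<omega> \<le> 0}"
  have F: "F \<in> sets M" unfolding F_def by measurable
  have mi: "integrable M m" unfolding m_def using fi by (intro running_max_integrable[OF mp]) auto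
  have mi': "integrable M (\<lambda>\<omega>. m \<omega> - m (\<sigma> \<omega>))"
    using mi measure_preserving_integral(1)[OF mp mi] by simp
  have "0 = integral\<^sup>L M (\<lambda>\<omega>. m \<omega> - m (\<sigma> \<omega>))"
    using mi measure_preserving_integral[OF mp mi] by simp
  also have "\<dots> \<le> integral\<^sup>L M (\<lambda>\<omega>. f \<omega> - c + c * indicator F \<omega>)"
  proof (rule integral_mono[OF mi'])
    show "integrable M (\<lambda>\<omega>. f \<omega> - c + c * indicator F \<omega>)"
      using fi F by (intro Bochner_Integration.integrable_add Bochner_Integration.integrable_diff
          integrable_mult_right) (auto simp: integrable_indicator_iff less_top[symmetric])
    fix \<omega> assume "\<omega> \<in> space M"
    then show "m \<omega> - m (\<sigma> \<omega>) \<le> f \<omega> - c + c * indicator F \<omega>"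
      using running_max_step[where f=f and c=c and \<omega>=\<omega> and \<sigma>=\<sigma> and N=N, OF c f0] unfolding m_def F_def by (auto simp: indicator_def)
  qed
  also have "\<dots> = integral\<^sup>L M f - c + c * measure M F"
    using fi F by (simp add: Bochner_Integration.integral_add Bochner_Integration.integral_diff
        integrable_indicator_iff less_top[symmetric] prob_space)
  finally show ?thesis unfolding F_def m_def .
qed

lemma nonpositive_sums_positive_measure:
  assumes P: "prob_space M" and mp: "measure_preserving_map M \<sigma>" and fi: "integrable M f"
    and f0: "\<And>\<omega>. f \<omega> \<ge> 0" and c: "c > integral\<^sup>L M f"
  shows "measure M {\<omega>\<in>space M. \<forall>k. birkhoff_sum \<sigma> (\<lambda>\<omega>. f \<omega> - c) k \<omega> \<le> 0} > 0"
proof -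
  interpret prob_space M by (rule P)
  define g where "g = (\<lambda>\<omega>. f \<omega> - c)"
  have sm: "\<sigma> \<in> M \<rightarrow>\<^sub>M M" using mp unfolding measure_preserving_map_def by blast
  have [measurable]: "\<And>N. running_max \<sigma> g N \<in> borel_measurable M"
    unfolding g_def using fi by (intro running_max_measurable[OF sm]) auto
  have Ef: "integral\<^sup>L M f \<ge> 0" using f0 by (simp add: integral_nonneg)
  define F where "F = (\<lambda>N. {\<omega>\<in>space M. running_max \<sigma> g N \<omega> \<le> 0})"
  have "F N \<in> sets M" for N unfolding F_def by measurable
  then have Fs: "range F \<subseteq> sets M" by auto
  have Fd: "decseq F" unfolding decseq_Suc_iff F_def by auto
  have Z: "(\<Inter>N. F N) = {\<omega>\<in>space M. \<forall>k. birkhoff_sum \<sigma> g k \<omega> \<le> 0}"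
    unfolding F_def running_max_nonpos_iff using order_refl by blast
  have "(\<lambda>N. measure M (F N)) \<longlonglongrightarrow> measure M (\<Inter>N. F N)"
    by (rule finite_Lim_measure_decseq[OF Fs Fd])
  then have lim: "(\<lambda>N. integral\<^sup>L M f - c + c * measure M (F N))
      \<longlonglongrightarrow> integral\<^sup>L M f - c + c * measure M (\<Inter>N. F N)"
    by (intro tendsto_intros)
  have "0 \<le> integral\<^sup>L M f - c + c * measure M (F N)" for N
    unfolding F_def g_def using c Ef by (intro maximal_ergodic_inequality[OF P mp fi f0]) simp
  with lim have "0 \<le> integral\<^sup>L M f - c + c * measure M (\<Inter>N. F N)"
    by (intro LIMSEQ_le_const) auto
  then have "c * measure M (\<Inter>N. F N) > 0" using c by linarith
  then have "measure M (\<Inter>N. F N) > 0"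
    using c Ef measure_nonneg[of M "\<Inter>N. F N"] by (auto simp: zero_less_mult_iff)
  then show ?thesis unfolding Z g_def .
qed

section \<open>Almost sure linear growth bound for Birkhoff sums\<close>

definition unbounded_sums :: "'a measure \<Rightarrow> ('a \<Rightarrow> 'a) \<Rightarrow> ('a \<Rightarrow> real) \<Rightarrow> 'a set" where
  "unbounded_sums M \<sigma> g = {\<omega>\<in>space M. \<forall>K::nat. \<exists>n. birkhoff_sum \<sigma> g n \<omega> > real K}"

text \<open>Unboundedness of the sums is unchanged by one step of \<open>\<sigma>\<close>, since
  \<open>S\<^sub>n\<^sub>+\<^sub>1 g \<omega> = g \<omega> + S\<^sub>n g (\<sigma> \<omega>)\<close>.\<close>
lemma unbounded_sums_shift:
  "(\<forall>K::nat. \<exists>n. birkhoff_sum \<sigma> g n (\<sigma> \<omega>) > real K) \<longleftrightarrow>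
   (\<forall>K::nat. \<exists>n. birkhoff_sum \<sigma> g n \<omega> > real K)"
proof (intro iffI allI)
  fix K :: nat
  define K' where "K' = K + nat \<lceil>\<bar>g \<omega>\<bar>\<rceil>"
  have K': "real K' \<ge> K + \<bar>g \<omega>\<bar>" unfolding K'_def by linarith
  {
    assume "\<forall>K::nat. \<exists>n. birkhoff_sum \<sigma> g n (\<sigma> \<omega>) > real K"
    then obtain n where "birkhoff_sum \<sigma> g n (\<sigma> \<omega>) > real K'" by blast
    then have "birkhoff_sum \<sigma> g (Suc n) \<omega> > real K"
      using K' unfolding birkhoff_sum_Suc by linarith
    then show "\<exists>n. birkhoff_sum \<sigma> g n \<omega> > real K" by blast
  next
    assume "\<forall>K::nat. \<exists>n. birkhoff_sum \<sigma> g n \<omega> > real K"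
    then obtain n where n: "birkhoff_sum \<sigma> g n \<omega> > real K'" by blast
    moreover have "real K' \<ge> 0" by simp
    ultimately obtain j where j: "n = Suc j" by (cases n) auto
    have "birkhoff_sum \<sigma> g j (\<sigma> \<omega>) > real K"
      using n K' unfolding j birkhoff_sum_Suc by linarith
    then show "\<exists>n. birkhoff_sum \<sigma> g n (\<sigma> \<omega>) > real K" by blast
  }
qed

text \<open>For \<open>c > E f\<close> the sums of \<open>f - c\<close> are almost surely bounded above:
  the unbounded set is invariant, hence null or conull by ergodicity, and it is
  disjoint from a set of positive measure.\<close>
lemma unbounded_sums_null:
  assumes P: "prob_space M" and erg: "ergodic_map M \<sigma>" and fi: "integrable M f"
    and f0: "\<And>\<omega>. f \<omega> \<ge> 0" and c: "c > integral\<^sup>L M f"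
  shows "unbounded_sums M \<sigma> (\<lambda>\<omega>. f \<omega> - c) \<in> sets M"
    and "measure M (unbounded_sums M \<sigma> (\<lambda>\<omega>. f \<omega> - c)) = 0"
proof -
  interpret prob_space M by (rule P)
  have mp: "measure_preserving_map M \<sigma>" using erg unfolding ergodic_map_def by blast
  have sm: "\<sigma> \<in> M \<rightarrow>\<^sub>M M" using mp unfolding measure_preserving_map_def by blast
  define g where "g = (\<lambda>\<omega>. f \<omega> - c)"
  have [measurable]: "\<And>n. birkhoff_sum \<sigma> g n \<in> borel_measurable M"
    unfolding g_def using fi by (intro birkhoff_sum_measurable[OF sm]) auto
  define U where "U = unbounded_sums M \<sigma> g"
  define Z where "Z = {\<omega>\<in>space M. \<forall>k. birkhoff_sum \<sigma> g k \<omega> \<le> 0}"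
  have U: "U \<in> sets M" unfolding U_def unbounded_sums_def by measurable
  then show "unbounded_sums M \<sigma> (\<lambda>\<omega>. f \<omega> - c) \<in> sets M" unfolding U_def g_def .
  have Z: "Z \<in> sets M" unfolding Z_def by measurable
  have "\<sigma> -` U \<inter> space M = U"
    using unbounded_sums_shift[of \<sigma> g] measurable_space[OF sm]
    unfolding U_def unbounded_sums_def by auto
  then have "measure M U = 0 \<or> measure M U = 1"
    using erg U unfolding ergodic_map_def by blast
  moreover have "measure M U < 1"
  proof -
    have "U \<subseteq> space M - Z"
    proof
      fix \<omega> assume "\<omega> \<in> U"
      then obtain n where "\<omega> \<in> space M" "birkhoff_sum \<sigma> g n \<omega> > real (0::nat)"
        unfolding U_def unbounded_sums_def by blast
      then show "\<omega> \<in> space M - Z" unfolding Z_def by (auto simp: not_le)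
    qed
    then have "measure M U \<le> 1 - measure M Z"
      using U Z by (metis finite_measure_mono prob_compl sets.compl_sets)
    moreover have "measure M Z > 0"
      using nonpositive_sums_positive_measure[OF P mp fi f0 c] unfolding Z_def g_def .
    ultimately show ?thesis by linarith
  qed
  ultimately show "measure M (unbounded_sums M \<sigma> (\<lambda>\<omega>. f \<omega> - c)) = 0"
    unfolding U_def g_def by linarith
qed

lemma birkhoff_sum_eventually_bounded:
  assumes P: "prob_space M" and erg: "ergodic_map M \<sigma>" and fi: "integrable M f"
    and f0: "\<And>\<omega>. f \<omega> \<ge> 0" and \<delta>: "\<delta> > 0" and \<eta>: "\<eta> > 0"
  shows "\<exists>N0. {\<omega>\<in>space M. \<forall>n\<ge>N0. birkhoff_sum \<sigma> f n \<omega> \<le> real n * (integral\<^sup>L M f + \<delta>)} \<in> sets M \<and>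
           measure M {\<omega>\<in>space M. \<forall>n\<ge>N0. birkhoff_sum \<sigma> f n \<omega> \<le> real n * (integral\<^sup>L M f + \<delta>)} \<ge> 1 - \<eta>"
proof -
  interpret prob_space M by (rule P)
  have sm: "\<sigma> \<in> M \<rightarrow>\<^sub>M M" using erg unfolding ergodic_map_def measure_preserving_map_def by blast
  have [measurable]: "\<And>n. birkhoff_sum \<sigma> f n \<in> borel_measurable M"
    using fi by (intro birkhoff_sum_measurable[OF sm]) auto
  define m where "m = integral\<^sup>L M f"
  define c where "c = m + \<delta> / 2"
  define U where "U = unbounded_sums M \<sigma> (\<lambda>\<omega>. f \<omega> - c)"
  have U: "U \<in> sets M" "measure M U = 0"
    using unbounded_sums_null[OF P erg fi f0, of c] \<delta> unfolding U_def c_def m_def by auto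
  define D where "D = (\<lambda>N0. {\<omega>\<in>space M. \<forall>n\<ge>N0. birkhoff_sum \<sigma> f n \<omega> \<le> real n * (m + \<delta>)})"
  have "D N \<in> sets M" for N unfolding D_def by measurable
  then have Ds: "range D \<subseteq> sets M" by auto
  have Di: "incseq D" unfolding incseq_Suc_iff D_def by auto
  have "space M - U \<subseteq> (\<Union>N. D N)"
  proof
    fix \<omega> assume w: "\<omega> \<in> space M - U"
    then obtain K :: nat where "\<forall>n. birkhoff_sum \<sigma> (\<lambda>\<omega>. f \<omega> - c) n \<omega> \<le> real K"
      unfolding U_def unbounded_sums_def by (auto simp: not_less)
    then have K: "birkhoff_sum \<sigma> f n \<omega> \<le> real K + real n * c" for n
      by (auto simp: birkhoff_sum_diff_const algebra_simps)
    have "\<omega> \<in> D (nat \<lceil>2 * K / \<delta>\<rceil>)" unfolding D_def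
    proof (intro CollectI conjI allI impI)
      fix n assume "nat \<lceil>2 * K / \<delta>\<rceil> \<le> n"
      then have "real K \<le> real n * (\<delta> / 2)" using \<delta> by (simp add: field_simps)
      then show "birkhoff_sum \<sigma> f n \<omega> \<le> real n * (m + \<delta>)"
        using K[of n] unfolding c_def by (simp add: algebra_simps)
    qed (use w in auto)
    then show "\<omega> \<in> (\<Union>N. D N)" by blast
  qed
  then have "measure M (\<Union>N. D N) \<ge> measure M (space M - U)"
    using Ds by (intro finite_measure_mono) auto
  then have "measure M (\<Union>N. D N) \<ge> 1"
    using U prob_compl by simp
  then have "measure M (\<Union>N. D N) = 1"
    using prob_le_1[of "\<Union>N. D N"] by linarith
  then have "(\<lambda>N. measure M (D N)) \<longlonglongrightarrow> 1"
    using finite_Lim_measure_incseq[OF Ds Di] by simp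
  then have "eventually (\<lambda>N. measure M (D N) > 1 - \<eta>) sequentially"
    using \<eta> by (intro order_tendstoD(1)) auto
  then obtain N0 where "measure M (D N0) > 1 - \<eta>" by (auto simp: eventually_sequentially)
  then show ?thesis using Ds unfolding D_def m_def by (intro exI[of _ N0]) auto
qed

lemma orbit_perturbation_bound:
  fixes A :: "'a \<Rightarrow> real^'d^'d" and D :: "nat \<Rightarrow> real^'d^'d" and e :: real
  assumes e: "e \<ge> 0" and D: "\<And>k. mat_opnorm (D k) \<le> 1"
  shows "mat_opnorm (mat_prod (\<lambda>k. A ((\<sigma> ^^ k) \<omega>) + e *\<^sub>R D k) n - mat_prod (\<lambda>k. A ((\<sigma> ^^ k) \<omega>)) n)
      \<le> exp (birkhoff_sum \<sigma> (\<lambda>\<omega>. max 0 (ln (mat_opnorm (A \<omega>)))) n \<omega>) * ((1 + e) ^ n - 1)"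
proof -
  let ?b = "\<lambda>k. exp (max 0 (ln (mat_opnorm (A ((\<sigma> ^^ k) \<omega>)))))"
  have "(\<Prod>k<n. ?b k) = exp (birkhoff_sum \<sigma> (\<lambda>\<omega>. max 0 (ln (mat_opnorm (A \<omega>)))) n \<omega>)"
    unfolding birkhoff_sum_def by (simp add: exp_sum)
  moreover have "mat_opnorm (mat_prod (\<lambda>k. A ((\<sigma> ^^ k) \<omega>) + e *\<^sub>R D k) n
      - mat_prod (\<lambda>k. A ((\<sigma> ^^ k) \<omega>)) n) \<le> (\<Prod>k<n. ?b k) * ((1 + e) ^ n - 1)"
    by (rule mat_prod_perturb_relative) (use e D in \<open>auto intro: mat_opnorm_le_exp_log_plus\<close>)
  ultimately show ?thesis by simp
qed

corollary orbit_perturbation_le_one: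
  fixes A :: "'a \<Rightarrow> real^'d^'d" and D :: "nat \<Rightarrow> real^'d^'d" and e :: real
  assumes e: "e \<ge> 0" and D: "\<And>k. mat_opnorm (D k) \<le> 1"
    and sum: "birkhoff_sum \<sigma> (\<lambda>\<omega>. max 0 (ln (mat_opnorm (A \<omega>)))) n \<omega> \<le> K"
    and K: "exp K * ((1 + e) ^ n - 1) \<le> 1"
  shows "mat_opnorm (mat_prod (\<lambda>k. A ((\<sigma> ^^ k) \<omega>) + e *\<^sub>R D k) n - mat_prod (\<lambda>k. A ((\<sigma> ^^ k) \<omega>)) n) \<le> 1"
proof -
  have "exp (birkhoff_sum \<sigma> (\<lambda>\<omega>. max 0 (ln (mat_opnorm (A \<omega>)))) n \<omega>) * ((1 + e) ^ n - 1)
      \<le> exp K * ((1 + e) ^ n - 1)"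
    using sum e by (intro mult_right_mono) auto
  then show ?thesis using orbit_perturbation_bound[where D=D and A=A and \<sigma>=\<sigma> and \<omega>=\<omega> and n=n, OF e D] K by linarith
qed

text \<open>Choice of scale: for \<open>N = \<lfloor>C |ln e|\<rfloor>\<close> the growth factor
  \<open>exp (N / (2C)) \<le> e\<^sup>-\<^sup>1\<^sup>/\<^sup>2\<close> is beaten by \<open>(1 + e)\<^sup>N - 1 = O(e |ln e|)\<close>,
  and \<open>N\<close> eventually exceeds any given \<open>N\<^sub>0\<close>.\<close>
lemma logarithmic_time_scale:
  fixes C :: real and N0 :: nat
  assumes C: "C > 0"
  shows "\<forall>\<^sub>F e in at_right 0. N0 \<le> nat \<lfloor>C * \<bar>ln e\<bar>\<rfloor> \<and>
           exp (real (nat \<lfloor>C * \<bar>ln e\<bar>\<rfloor>) / (2 * C)) * ((1 + e) ^ nat \<lfloor>C * \<bar>ln e\<bar>\<rfloor> - 1) \<le> 1"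
proof -
  have lim: "((\<lambda>e::real. exp (- ln e / 2) * (exp (- C * e * ln e) - 1)) \<longlongrightarrow> 0) (at_right 0)"
    using C by real_asymp
  have large: "filterlim (\<lambda>e::real. - ln e) at_top (at_right 0)"
    by real_asymp
  have "\<forall>\<^sub>F e in at_right 0. 0 < e \<and> e < 1 \<and> - ln e > (real N0 + 1) / C \<and>
          exp (- ln e / 2) * (exp (- C * e * ln e) - 1) < 1"
    using eventually_at_right_less[of 0] eventually_at_right_field large lim
    by (intro eventually_conj)
      (auto simp: filterlim_at_top_dense intro: exI[of _ 1] order_tendstoD(2))
  then show ?thesis
  proof (rule eventually_mono, elim conjE)
    fix e :: real assume e0: "0 < e" and e1: "e < 1"
      and big: "- ln e > (real N0 + 1) / C" and small: "exp (- ln e / 2) * (exp (- C * e * ln e) - 1) < 1"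
    define x where "x = C * \<bar>ln e\<bar>"
    define N where "N = nat \<lfloor>x\<rfloor>"
    have x: "x = - C * ln e" unfolding x_def using e0 e1 by simp
    have "x \<ge> 0" unfolding x_def using C by simp
    then have Nx: "real N \<le> x" and xN: "x < real N + 1" unfolding N_def by linarith+
    have "real N0 + 1 < x" using big C unfolding x by (simp add: field_simps)
    then have "N0 \<le> N" using xN by linarith
    have growth: "exp (real N / (2 * C)) \<le> exp (- ln e / 2)"
      using Nx C unfolding x by (simp add: field_simps)
    have "(1 + e) ^ N \<le> exp e ^ N" using e0 by (intro power_mono) auto
    also have "\<dots> = exp (real N * e)" by (simp add: exp_of_nat_mult)
    also have "\<dots> \<le> exp (x * e)" using Nx e0 by (simp add: mult_right_mono)
    also have "\<dots> = exp (- C * e * ln e)" unfolding x by (simp add: algebra_simps)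
    finally have pert: "(1 + e) ^ N - 1 \<le> exp (- C * e * ln e) - 1" by simp
    have "exp (real N / (2 * C)) * ((1 + e) ^ N - 1) \<le> exp (- ln e / 2) * (exp (- C * e * ln e) - 1)"
      using growth pert e0 by (intro mult_mono) auto
    with \<open>N0 \<le> N\<close> small show "N0 \<le> nat \<lfloor>C * \<bar>ln e\<bar>\<rfloor> \<and>
        exp (real (nat \<lfloor>C * \<bar>ln e\<bar>\<rfloor>) / (2 * C)) * ((1 + e) ^ nat \<lfloor>C * \<bar>ln e\<bar>\<rfloor> - 1) \<le> 1"
      unfolding N_def x_def by linarith
  qed
qed

theorem lemma2p3:
  fixes M :: "'a measure" and \<sigma> :: "'a \<Rightarrow> 'a" and A :: "'a \<Rightarrow> real^'d^'d"
  assumes "prob_space M"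
    and "ergodic_map M \<sigma>"
    and "A \<in> borel_measurable M"
    and "integrable M (\<lambda>\<omega>. max 0 (ln (mat_opnorm (A \<omega>))))"
  shows "\<exists>C>0. \<forall>\<eta>\<^sub>0>0. \<exists>\<epsilon>\<^sub>0>0. \<forall>\<epsilon>::real. 0 < \<epsilon> \<and> \<epsilon> < \<epsilon>\<^sub>0 \<longrightarrow>
           (\<exists>G\<in>sets M. measure M G \<ge> 1 - \<eta>\<^sub>0 \<and>
             (\<forall>\<omega>\<in>G. \<forall>\<Delta> :: int \<Rightarrow> real^'d^'d. (\<forall>n. mat_opnorm (\<Delta> n) \<le> 1) \<longrightarrow>
                (let N = nat \<lfloor>C * \<bar>ln \<epsilon>\<bar>\<rfloor> in
                 mat_opnorm (mat_prod (\<lambda>k. A ((\<sigma> ^^ k) \<omega>) + \<epsilon> *\<^sub>R \<Delta> (int k)) N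
                             - mat_prod (\<lambda>k. A ((\<sigma> ^^ k) \<omega>)) N) \<le> 1)))"
proof -
  define f where "f = (\<lambda>\<omega>. max 0 (ln (mat_opnorm (A \<omega>))))"
  have fi: "integrable M f" and f0: "\<And>\<omega>. f \<omega> \<ge> 0"
    using assms(4) unfolding f_def by auto
  define L where "L = integral\<^sup>L M f + 1"
  have L: "L > 0" unfolding L_def using f0 by (simp add: integral_nonneg add_nonneg_pos)
  define C where "C = 1 / (2 * L)"
  have C: "C > 0" "L = 1 / (2 * C)" using L unfolding C_def by auto
  have small_scale: "\<exists>\<epsilon>\<^sub>0>0. \<forall>\<epsilon>. 0 < \<epsilon> \<and> \<epsilon> < \<epsilon>\<^sub>0 \<longrightarrow> (\<exists>G\<in>sets M. measure M G \<ge> 1 - \<eta> \<and>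
        (\<forall>\<omega>\<in>G. \<forall>\<Delta> :: int \<Rightarrow> real^'d^'d. (\<forall>n. mat_opnorm (\<Delta> n) \<le> 1) \<longrightarrow>
           mat_opnorm (mat_prod (\<lambda>k. A ((\<sigma> ^^ k) \<omega>) + \<epsilon> *\<^sub>R \<Delta> (int k)) (nat \<lfloor>C * \<bar>ln \<epsilon>\<bar>\<rfloor>)
             - mat_prod (\<lambda>k. A ((\<sigma> ^^ k) \<omega>)) (nat \<lfloor>C * \<bar>ln \<epsilon>\<bar>\<rfloor>)) \<le> 1))"
    if "\<eta> > 0" for \<eta>
  proof -
    obtain N0 where G: "{\<omega>\<in>space M. \<forall>n\<ge>N0. birkhoff_sum \<sigma> f n \<omega> \<le> real n * L} \<in> sets M"
      "measure M {\<omega>\<in>space M. \<forall>n\<ge>N0. birkhoff_sum \<sigma> f n \<omega> \<le> real n * L} \<ge> 1 - \<eta>"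
      using birkhoff_sum_eventually_bounded[OF assms(1,2) fi f0 zero_less_one \<open>\<eta> > 0\<close>]
      unfolding L_def by blast
    obtain \<epsilon>\<^sub>0 where "\<epsilon>\<^sub>0 > 0" and scale: "\<And>e. 0 < e \<Longrightarrow> e < \<epsilon>\<^sub>0 \<Longrightarrow> N0 \<le> nat \<lfloor>C * \<bar>ln e\<bar>\<rfloor> \<and>
        exp (real (nat \<lfloor>C * \<bar>ln e\<bar>\<rfloor>) / (2 * C)) * ((1 + e) ^ nat \<lfloor>C * \<bar>ln e\<bar>\<rfloor> - 1) \<le> 1"
      using logarithmic_time_scale[OF C(1), of N0] unfolding eventually_at_right_field by blast
    have bound: "mat_opnorm (mat_prod (\<lambda>k. A ((\<sigma> ^^ k) \<omega>) + e *\<^sub>R \<Delta> (int k)) (nat \<lfloor>C * \<bar>ln e\<bar>\<rfloor>)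
             - mat_prod (\<lambda>k. A ((\<sigma> ^^ k) \<omega>)) (nat \<lfloor>C * \<bar>ln e\<bar>\<rfloor>)) \<le> 1"
      if e: "0 < e" "e < \<epsilon>\<^sub>0" and \<omega>: "\<forall>n\<ge>N0. birkhoff_sum \<sigma> f n \<omega> \<le> real n * L"
        and \<Delta>: "\<forall>n. mat_opnorm (\<Delta> n) \<le> 1" for e \<omega> and \<Delta> :: "int \<Rightarrow> real^'d^'d"
    proof -
      define N where "N = nat \<lfloor>C * \<bar>ln e\<bar>\<rfloor>"
      have N: "N0 \<le> N" "exp (real N / (2 * C)) * ((1 + e) ^ N - 1) \<le> 1"
        using scale[OF e] unfolding N_def by auto
      have "birkhoff_sum \<sigma> f N \<omega> \<le> real N / (2 * C)" using \<omega> N(1) C(2) by simp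
      then have "mat_opnorm (mat_prod (\<lambda>k. A ((\<sigma> ^^ k) \<omega>) + e *\<^sub>R \<Delta> (int k)) N
          - mat_prod (\<lambda>k. A ((\<sigma> ^^ k) \<omega>)) N) \<le> 1"
        using e(1) \<Delta> N(2) unfolding f_def
        by (intro orbit_perturbation_le_one[where K="real N / (2 * C)"]) auto
      then show ?thesis unfolding N_def .
    qed
    show ?thesis
      by (intro exI[of _ \<epsilon>\<^sub>0] conjI allI impI \<open>\<epsilon>\<^sub>0 > 0\<close> bexI[OF _ G(1)] G(2) ballI;
          blast intro: bound)
  qed
  show ?thesis unfolding Let_def by (rule exI[of _ C]) (use C(1) small_scale in blast)
qed

end
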